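(* $D(19,\{3,4\})\ge 34$; equivalently, every $\{K_3,K_4\}$-decomposition of $K_{19}$ has $\alpha\ge 11$.
   Context: A $\{K_3,K_4\}$-decomposition of $K_v$ is a collection of subgraphs, each isomorphic to $K_3$ or $K_4$, such that every edge of $K_v$ lies in exactly one of them. $\alpha$ and $\beta$ denote the numbers of copies of $K_3$ and $K_4$ in the decomposition (so $3\alpha+6\beta=\binom{v}{2}$). $D(v,\{3,4\})$ is the minimum of $\alpha+\beta$ over all such decompositions of $K_v$. *)

theory Defs
  imports Main
begin

text \<open>A subgraph isomorphic to K_3 (resp. K_4) of K_v is determined by its
vertex set, a 3-element (resp. 4-element) subset of {0..<v}.\<close>

definition K34_decomposition :: "nat \<Rightarrow> nat set set \<Rightarrow> bool" where
  "K34_decomposition v \<B> \<longleftrightarrow>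
     finite \<B> \<and>
     (\<forall>B\<in>\<B>. B \<subseteq> {0..<v} \<and> (card B = 3 \<or> card B = 4)) \<and>
     (\<forall>e. e \<subseteq> {0..<v} \<and> card e = 2 \<longrightarrow> (\<exists>!B. B \<in> \<B> \<and> e \<subseteq> B))"

definition num_K3 :: "nat set set \<Rightarrow> nat" where
  "num_K3 \<B> = card {B\<in>\<B>. card B = 3}"

definition num_K4 :: "nat set set \<Rightarrow> nat" where
  "num_K4 \<B> = card {B\<in>\<B>. card B = 4}"

end

theory Submission
  imports Defs
begin

text \<open>Since \<open>3\<alpha> + 6\<beta> = 171\<close>, \<open>\<alpha>\<close> is odd and \<open>\<alpha> + \<beta> = (57 + \<alpha>) / 2\<close>, so it suffices to show
  \<open>\<alpha> \<ge> 11\<close>. Every point lies on \<open>r\<^sub>3\<close> triangles and \<open>r\<^sub>4\<close> copies of \<open>K\<^sub>4\<close> with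
  \<open>2 r\<^sub>3 + 3 r\<^sub>4 = 18\<close>, so a point on some triangle lies on at least three. Hence the set
  \<open>T\<close> of points covered by triangles has \<open>t \<le> \<alpha>\<close> elements, and \<open>t \<ge> 7\<close> because the
  triangles through a point of \<open>T\<close> contain \<open>2 r\<^sub>3 \<ge> 6\<close> further points of \<open>T\<close>.
  Weight each edge by 3, -1 or 1 according as 2, 1 or 0 of its ends lie in \<open>T\<close>: a triangle
  (always inside \<open>T\<close>) has weight 9, a \<open>K\<^sub>4\<close> with \<open>k\<close> points in \<open>T\<close> has weight
  \<open>3(k-1)(k-2) \<ge> 0\<close>, and \<open>K\<^sub>1\<^sub>9\<close> has weight \<open>3t\<^sup>2 - 39t + 171\<close>. So
  \<open>9\<alpha> \<le> 3t\<^sup>2 - 39t + 171\<close>, which together with \<open>7 \<le> t \<le> \<alpha>\<close> forces \<open>t \<ge> 11\<close>.\<close>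

lemma sum_card_blocks_containing:
  assumes "finite V" "finite \<A>" "\<And>B. B \<in> \<A> \<Longrightarrow> B \<subseteq> V"
  shows "(\<Sum>x\<in>V. card {B\<in>\<A>. x \<in> B}) = (\<Sum>B\<in>\<A>. card B)"
proof -
  have "(\<Sum>x\<in>V. card {B\<in>\<A>. x \<in> B}) = (\<Sum>x\<in>V. \<Sum>B\<in>{B\<in>\<A>. x \<in> B}. 1)"
    by simp
  also have "\<dots> = (\<Sum>B\<in>\<A>. \<Sum>x\<in>{x\<in>V. x \<in> B}. 1)"
    using assms(1,2) by (rule sum.swap_restrict)
  also have "\<dots> = (\<Sum>B\<in>\<A>. card B)"
  proof (intro sum.cong refl)
    fix B assume "B \<in> \<A>"
    then have "{x\<in>V. x \<in> B} = B" using assms(3) by blast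
    then show "(\<Sum>x\<in>{x\<in>V. x \<in> B}. 1) = card B" by simp
  qed
  finally show ?thesis .
qed

lemma sum_distinct_pairs_mult:
  fixes f :: "'a \<Rightarrow> 'b::comm_ring_1"
  assumes "finite A"
  shows "(\<Sum>x\<in>A. \<Sum>y\<in>A-{x}. f x * f y) = (\<Sum>x\<in>A. f x)^2 - (\<Sum>x\<in>A. (f x)^2)"
proof -
  have "(\<Sum>x\<in>A. \<Sum>y\<in>A-{x}. f x * f y) = (\<Sum>x\<in>A. f x * (\<Sum>y\<in>A. f y) - (f x)^2)"
    using assms
    by (intro sum.cong) (simp_all add: sum_distrib_left[symmetric] sum_diff1 algebra_simps power2_eq_square)
  then show ?thesis
    by (simp add: sum_subtractf sum_distrib_right[symmetric] power2_eq_square)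
qed

text \<open>The weight of an ordered pair is 1, -1 or 3 according as 0, 1 or 2 of its points lie
  in \<open>S\<close>; \<open>clique_weight n s\<close> is the total over the ordered pairs of an \<open>n\<close>-clique
  with \<open>s\<close> points in \<open>S\<close> (see \<open>sum_pair_weight\<close>).\<close>

definition pair_weight :: "'a set \<Rightarrow> 'a \<Rightarrow> 'a \<Rightarrow> int" where
  "pair_weight S x y =
     (1 - 2 * of_bool (x \<in> S)) * (1 - 2 * of_bool (y \<in> S)) + 2 * of_bool (x \<in> S) * of_bool (y \<in> S)"

definition clique_weight :: "nat \<Rightarrow> nat \<Rightarrow> int" where
  "clique_weight n s = (int n - 2 * int s)^2 - int n + 2 * int s * (int s - 1)"

lemma sum_pair_weight:
  assumes "finite A"
  shows "(\<Sum>x\<in>A. \<Sum>y\<in>A-{x}. pair_weight S x y) = clique_weight (card A) (card (A \<inter> S))"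
proof -
  define \<sigma> where "\<sigma> x = 1 - 2 * (of_bool (x \<in> S) :: int)" for x
  define \<iota> where "\<iota> x = (of_bool (x \<in> S) :: int)" for x
  have "(\<Sum>x\<in>A. \<Sum>y\<in>A-{x}. pair_weight S x y)
        = (\<Sum>x\<in>A. \<Sum>y\<in>A-{x}. \<sigma> x * \<sigma> y) + 2 * (\<Sum>x\<in>A. \<Sum>y\<in>A-{x}. \<iota> x * \<iota> y)"
    by (simp add: pair_weight_def \<sigma>_def \<iota>_def sum.distrib sum_distrib_left mult.assoc)
  moreover have "(\<Sum>x\<in>A. \<iota> x) = int (card (A \<inter> S))"
    using assms by (simp add: \<iota>_def sum.inter_filter[symmetric] Int_def)
  moreover have "(\<Sum>x\<in>A. (\<iota> x)^2) = (\<Sum>x\<in>A. \<iota> x)"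
    by (intro sum.cong) (simp_all add: \<iota>_def)
  moreover have "(\<Sum>x\<in>A. \<sigma> x) = int (card A) - 2 * int (card (A \<inter> S))"
    using assms
    by (simp add: \<sigma>_def sum_subtractf sum_distrib_left[symmetric] \<iota>_def[symmetric] calculation(2))
  moreover have "(\<Sum>x\<in>A. (\<sigma> x)^2) = int (card A)"
  proof -
    have "(\<sigma> x)^2 = 1" for x by (cases "x \<in> S") (simp_all add: \<sigma>_def)
    then show ?thesis by simp
  qed
  ultimately show ?thesis
    using assms by (simp add: sum_distinct_pairs_mult clique_weight_def algebra_simps power2_eq_square)
qed

locale clique_decomposition =
  fixes V :: "'a set" and \<B> :: "'a set set"
  assumes finite_points: "finite V"
    and finite_blocks: "finite \<B>"
    and block_subset: "B \<in> \<B> \<Longrightarrow> B \<subseteq> V"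
    and unique_block: "x \<in> V \<Longrightarrow> y \<in> V \<Longrightarrow> x \<noteq> y \<Longrightarrow> \<exists>!B. B \<in> \<B> \<and> x \<in> B \<and> y \<in> B"
begin

lemma finite_block: "B \<in> \<B> \<Longrightarrow> finite B"
  using block_subset finite_points finite_subset by blast

lemma sum_other_points:
  assumes "x \<in> V"
  shows "(\<Sum>y\<in>V-{x}. f y) = (\<Sum>B\<in>{B\<in>\<B>. x \<in> B}. \<Sum>y\<in>B-{x}. f y)"
proof -
  have "V - {x} \<subseteq> (\<Union>B\<in>{B\<in>\<B>. x \<in> B}. B - {x})"
  proof
    fix y assume "y \<in> V - {x}"
    with assms obtain B where "B \<in> \<B>" "x \<in> B" "y \<in> B"
      using unique_block[of x y] by auto
    with \<open>y \<in> V - {x}\<close> show "y \<in> (\<Union>B\<in>{B\<in>\<B>. x \<in> B}. B - {x})" by blast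
  qed
  then have "V - {x} = (\<Union>B\<in>{B\<in>\<B>. x \<in> B}. B - {x})"
    using block_subset by blast
  moreover have "(B - {x}) \<inter> (B' - {x}) = {}"
    if "B \<in> \<B>" "B' \<in> \<B>" "x \<in> B" "x \<in> B'" "B \<noteq> B'" for B B'
  proof (rule ccontr)
    assume "(B - {x}) \<inter> (B' - {x}) \<noteq> {}"
    then obtain y where "y \<in> B" "y \<in> B'" "y \<noteq> x" by blast
    moreover have "y \<in> V" using \<open>y \<in> B\<close> \<open>B \<in> \<B>\<close> block_subset by blast
    ultimately show False
      using that assms unique_block[of x y] by blast
  qed
  ultimately show ?thesis
    by (simp only:) (rule sum.UNION_disjoint; use finite_blocks finite_block in auto)
qed

lemma sum_ordered_pairs:
  "(\<Sum>x\<in>V. \<Sum>y\<in>V-{x}. g x y) = (\<Sum>B\<in>\<B>. \<Sum>x\<in>B. \<Sum>y\<in>B-{x}. g x y)"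
proof -
  have "(\<Sum>x\<in>V. \<Sum>y\<in>V-{x}. g x y) = (\<Sum>x\<in>V. \<Sum>B\<in>{B\<in>\<B>. x \<in> B}. \<Sum>y\<in>B-{x}. g x y)"
    by (intro sum.cong refl sum_other_points)
  also have "\<dots> = (\<Sum>B\<in>\<B>. \<Sum>x\<in>{x\<in>V. x \<in> B}. \<Sum>y\<in>B-{x}. g x y)"
    using finite_points finite_blocks by (rule sum.swap_restrict)
  also have "\<dots> = (\<Sum>B\<in>\<B>. \<Sum>x\<in>B. \<Sum>y\<in>B-{x}. g x y)"
    using block_subset by (intro sum.cong refl) (metis Collect_mem_eq Int_absorb1 Int_def)
  finally show ?thesis .
qed

lemma clique_weight_sum:
  "clique_weight (card V) (card (V \<inter> S)) = (\<Sum>B\<in>\<B>. clique_weight (card B) (card (B \<inter> S)))"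
  using sum_ordered_pairs[of "pair_weight S"]
  by (simp add: sum_pair_weight finite_points finite_block)

end

lemma clique_weight_K3: "clique_weight 3 3 = 18"
  by (simp add: clique_weight_def)

lemma clique_weight_K4_nonneg: "0 \<le> clique_weight 4 k"
proof -
  have "clique_weight 4 k = 6 * ((int k - 1) * (int k - 2))"
    by (simp add: clique_weight_def power2_eq_square algebra_simps)
  moreover have "0 \<le> (int k - 1) * (int k - 2)"
    by (cases "k \<le> 1") (simp_all add: zero_le_mult_iff)
  ultimately show ?thesis by simp
qed

locale K34_decomp =
  fixes v :: nat and \<B> :: "nat set set"
  assumes decomposition: "K34_decomposition v \<B>"
begin

sublocale clique_decomposition "{0..<v}" \<B>
proof
  show "finite \<B>" "\<And>B. B \<in> \<B> \<Longrightarrow> B \<subseteq> {0..<v}"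
    using decomposition by (auto simp: K34_decomposition_def)
  fix x y assume "x \<in> {0..<v}" "y \<in> {0..<v}" "x \<noteq> y"
  then have "{x, y} \<subseteq> {0..<v}" "card {x, y} = 2" by auto
  then show "\<exists>!B. B \<in> \<B> \<and> x \<in> B \<and> y \<in> B"
    using decomposition unfolding K34_decomposition_def by (metis insert_subset empty_subsetI)
qed simp

definition K3_blocks where "K3_blocks = {B \<in> \<B>. card B = 3}"
definition K4_blocks where "K4_blocks = {B \<in> \<B>. card B = 4}"
definition K3_degree where "K3_degree x = card {B \<in> K3_blocks. x \<in> B}"
definition K4_degree where "K4_degree x = card {B \<in> K4_blocks. x \<in> B}"
definition K3_points where "K3_points = \<Union>K3_blocks"

lemma card_K3_block: "B \<in> K3_blocks \<Longrightarrow> card B = 3"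
  and card_K4_block: "B \<in> K4_blocks \<Longrightarrow> card B = 4"
  by (simp_all add: K3_blocks_def K4_blocks_def)

lemma sum_blocks_split:
  "(\<Sum>B\<in>{B\<in>\<B>. P B}. f B)
     = (\<Sum>B\<in>{B\<in>K3_blocks. P B}. f B) + (\<Sum>B\<in>{B\<in>K4_blocks. P B}. f B)"
proof -
  have "{B\<in>\<B>. P B} = {B\<in>K3_blocks. P B} \<union> {B\<in>K4_blocks. P B}"
    using decomposition by (auto simp: K3_blocks_def K4_blocks_def K34_decomposition_def)
  then show ?thesis
    by (simp only:)
      (rule sum.union_disjoint; use finite_blocks in \<open>auto simp: K3_blocks_def K4_blocks_def\<close>)
qed

lemma edge_count: "3 * num_K3 \<B> + 6 * num_K4 \<B> = v choose 2"
proof -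
  have "int v ^ 2 - int v = (\<Sum>B\<in>\<B>. int (card B) ^ 2 - int (card B))"
    using clique_weight_sum[of "{}"] by (simp add: clique_weight_def)
  also have "\<dots> = (\<Sum>B\<in>K3_blocks. int (card B) ^ 2 - int (card B))
                    + (\<Sum>B\<in>K4_blocks. int (card B) ^ 2 - int (card B))"
    using sum_blocks_split[where P="\<lambda>_. True"] by simp
  also have "\<dots> = (\<Sum>B\<in>K3_blocks. 6) + (\<Sum>B\<in>K4_blocks. 12)"
    by (simp add: card_K3_block card_K4_block)
  finally have "int (v * (v - 1)) = 2 * int (3 * num_K3 \<B> + 6 * num_K4 \<B>)"
    by (simp add: num_K3_def num_K4_def K3_blocks_def K4_blocks_def power2_eq_square
        of_nat_diff algebra_simps)
  then have "v * (v - 1) = 2 * (3 * num_K3 \<B> + 6 * num_K4 \<B>)"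
    by (metis of_nat_eq_iff of_nat_mult of_nat_numeral)
  then show ?thesis
    by (simp add: choose_two)
qed

lemma degree_equation:
  assumes "x < v"
  shows "2 * K3_degree x + 3 * K4_degree x = v - 1"
proof -
  have "v - 1 = card ({0..<v} - {x})"
    using assms by simp
  also have "\<dots> = (\<Sum>B\<in>{B\<in>\<B>. x \<in> B}. card (B - {x}))"
    by (simp only: card_eq_sum) (rule sum_other_points, use assms in simp)
  also have "\<dots> = (\<Sum>B\<in>{B\<in>K3_blocks. x \<in> B}. card (B - {x}))
                    + (\<Sum>B\<in>{B\<in>K4_blocks. x \<in> B}. card (B - {x}))"
    by (rule sum_blocks_split)
  also have "\<dots> = (\<Sum>B\<in>{B\<in>K3_blocks. x \<in> B}. 2) + (\<Sum>B\<in>{B\<in>K4_blocks. x \<in> B}. 3)"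
    by (intro arg_cong2[where f="(+)"] sum.cong) (simp_all add: card_K3_block card_K4_block)
  finally show ?thesis
    by (simp add: K3_degree_def K4_degree_def)
qed

lemma K3_points_subset: "K3_points \<subseteq> {0..<v}"
  using block_subset by (auto simp: K3_points_def K3_blocks_def)

lemma K3_degree_pos: "x \<in> K3_points \<Longrightarrow> 0 < K3_degree x"
  using finite_blocks by (auto simp: K3_points_def K3_degree_def K3_blocks_def card_gt_0_iff)

lemma K3_degree_ge_3:
  assumes "3 dvd v - 1" and "x \<in> K3_points"
  shows "3 \<le> K3_degree x"
proof -
  have "2 * K3_degree x + 3 * K4_degree x = v - 1"
    using assms(2) K3_points_subset by (intro degree_equation) auto
  then have "3 dvd K3_degree x"
    using assms(1) by presburger
  then show ?thesis
    using K3_degree_pos[OF assms(2)] by (auto elim: dvdE)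
qed

lemma sum_K3_degree: "(\<Sum>x\<in>{0..<v}. K3_degree x) = 3 * num_K3 \<B>"
proof -
  have "(\<Sum>x\<in>{0..<v}. K3_degree x) = (\<Sum>B\<in>K3_blocks. card B)"
    unfolding K3_degree_def
    by (rule sum_card_blocks_containing) (use finite_blocks block_subset in \<open>auto simp: K3_blocks_def\<close>)
  then show ?thesis
    by (simp add: card_K3_block num_K3_def K3_blocks_def[symmetric])
qed

lemma card_K3_points_le:
  assumes "3 dvd v - 1"
  shows "card K3_points \<le> num_K3 \<B>"
proof -
  have "3 * card K3_points = (\<Sum>x\<in>K3_points. 3)"
    by simp
  also have "\<dots> \<le> (\<Sum>x\<in>K3_points. K3_degree x)"
    using K3_degree_ge_3[OF assms] by (rule sum_mono)
  also have "\<dots> \<le> (\<Sum>x\<in>{0..<v}. K3_degree x)"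
    using K3_points_subset by (intro sum_mono2) auto
  finally show ?thesis
    by (simp add: sum_K3_degree)
qed

lemma K3_degree_lt_card_K3_points:
  assumes "y \<in> K3_points"
  shows "2 * K3_degree y < card K3_points"
proof -
  define \<iota> where "\<iota> x = (of_bool (x \<in> K3_points) :: nat)" for x
  have y: "y < v" using assms K3_points_subset by auto
  have "2 * K3_degree y = (\<Sum>B\<in>{B\<in>K3_blocks. y \<in> B}. \<Sum>x\<in>B-{y}. \<iota> x)"
  proof -
    have "(\<Sum>x\<in>B-{y}. \<iota> x) = 2" if "B \<in> K3_blocks" "y \<in> B" for B
    proof -
      have "B \<subseteq> K3_points" using that(1) by (auto simp: K3_points_def)
      then have "(\<Sum>x\<in>B-{y}. \<iota> x) = card (B - {y})" by (simp add: \<iota>_def subset_iff)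
      then show ?thesis using that card_K3_block[OF that(1)] by simp
    qed
    then show ?thesis by (simp add: K3_degree_def)
  qed
  also have "\<dots> \<le> (\<Sum>B\<in>{B\<in>\<B>. y \<in> B}. \<Sum>x\<in>B-{y}. \<iota> x)"
    using finite_blocks by (intro sum_mono2) (auto simp: K3_blocks_def)
  also have "\<dots> = (\<Sum>x\<in>{0..<v}-{y}. \<iota> x)"
    using y by (simp add: sum_other_points)
  also have "\<dots> = card (K3_points - {y})"
  proof -
    have "({0..<v} - {y}) \<inter> K3_points = K3_points - {y}"
      using K3_points_subset by blast
    then show ?thesis
      by (simp only: \<iota>_def sum_of_bool_eq finite_Diff finite_atLeastLessThan Collect_mem_eq of_nat_id)
  qed
  also have "\<dots> < card K3_points"
    using assms K3_points_subset finite_subset by (intro card_Diff1_less) auto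
  finally show ?thesis .
qed

lemma K3_weight_bound: "18 * int (num_K3 \<B>) \<le> clique_weight v (card K3_points)"
proof -
  have "clique_weight v (card K3_points)
        = (\<Sum>B\<in>K3_blocks. clique_weight (card B) (card (B \<inter> K3_points)))
          + (\<Sum>B\<in>K4_blocks. clique_weight (card B) (card (B \<inter> K3_points)))"
    using clique_weight_sum[of K3_points] sum_blocks_split[where P="\<lambda>_. True"] K3_points_subset
    by (simp add: Int_absorb1)
  also have "(\<Sum>B\<in>K3_blocks. clique_weight (card B) (card (B \<inter> K3_points))) = 18 * int (num_K3 \<B>)"
  proof -
    have "B \<inter> K3_points = B" if "B \<in> K3_blocks" for B
      using that by (auto simp: K3_points_def)
    then show ?thesis
      by (simp add: card_K3_block clique_weight_K3 num_K3_def K3_blocks_def[symmetric])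
  qed
  finally show ?thesis
    using clique_weight_K4_nonneg by (simp add: card_K4_block sum_nonneg)
qed

lemma card_K3_points_ge_7:
  assumes "3 dvd v - 1" and "0 < num_K3 \<B>"
  shows "7 \<le> card K3_points"
proof -
  obtain B where B: "B \<in> K3_blocks"
    using assms(2) by (auto simp: num_K3_def K3_blocks_def[symmetric] card_gt_0_iff)
  then obtain y where "y \<in> B"
    using card_K3_block by fastforce
  with B have y: "y \<in> K3_points"
    by (auto simp: K3_points_def)
  show ?thesis
    using K3_degree_ge_3[OF assms(1) y] K3_degree_lt_card_K3_points[OF y] by linarith
qed

end

theorem mainTheorem20:
  assumes "K34_decomposition 19 \<B>"
  shows "num_K3 \<B> + num_K4 \<B> \<ge> 34"
proof -
  interpret K34_decomp 19 \<B>
    by unfold_locales (fact assms)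
  let ?t = "card K3_points"
  have edges: "num_K3 \<B> + 2 * num_K4 \<B> = 57"
    using edge_count by (simp add: choose_two)
  have mod3: "3 dvd (19 - 1 :: nat)"
    by simp
  have t_le: "?t \<le> num_K3 \<B>"
    using mod3 by (rule card_K3_points_le)
  have weight: "18 * int (num_K3 \<B>) \<le> clique_weight 19 ?t"
    by (rule K3_weight_bound)
  have "0 < num_K3 \<B>"
    using edges by presburger
  with mod3 have "7 \<le> ?t"
    by (rule card_K3_points_ge_7)
  have "11 \<le> ?t"
  proof (rule ccontr)
    assume "\<not> 11 \<le> ?t"
    with \<open>7 \<le> ?t\<close> have "?t \<in> {7, 8, 9, 10}"
      by auto
    with weight t_le show False
      by (auto simp: clique_weight_def)
  qed
  with t_le edges show ?thesis
    by linarith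
qed

end
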